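(* Let $S$ be an inverse semigroup acting on a presheaf of metric spaces $(X,E(S),p)$. For each $s\in S$, the map $\theta_s\colon X\cdot ss^{-1}\to X\cdot s^{-1}s$, $x\mapsto x\cdot s$, is an isometry with respect to the extended metric $d$, where $X\cdot e=\{x\cdot e: x\in X\}$.
   Context: An inverse semigroup is a semigroup $S$ in which every $s$ has a unique $s^{-1}\in S$ with $ss^{-1}s=s$ and $s^{-1}ss^{-1}=s^{-1}$. $E(S)$ is its set of idempotents, which commute and form a meet-semilattice with meet $ef$ (partial order $e\le f$ iff $e=ef$). Presheaf: for a meet-semilattice $E$, a presheaf $(X,E,p)$ is a set $X$ with maps $p\colon X\to E$ and $X\times E\to X$, $(x,e)\mapsto x\cdot e$, such that $(x\cdot e)\cdot f=x\cdot ef$, $x\cdot p(x)=x$, $p(x\cdot e)=p(x)e$. Fibers are $X_e=p^{-1}(e)$. A presheaf of metric spaces is such a presheaf with $p$ surjective, each fiber $X_e$ a metric space with metric $d_e$, and $d_e(x,y)\ge d_{ef}(x\cdot f,y\cdot f)$ for $x,y\in X_e$. The extended metric $d$ on $X$ is $d(x,y)=d_e(x,y)$ if $x,y\in X_e$, and $\infty$ if they lie in different fibers. Action: $S$ acts on $(X,E(S),p)$ if there is a right action $X\times S\to X$ (so $(x\cdot s)\cdot t=x\cdot (st)$) extending the presheaf map $X\times E(S)\to X$, with $p(x\cdot s)=s^{-1}p(x)s$ and $d_e(x,y)\ge d_{s^{-1}es}(x\cdot s,y\cdot s)$ for all $x,y\in X_e$, $s\in S$. *)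

theory Defs
  imports Main "HOL-Library.Extended_Real"
begin

definition inverse_semigroup :: "'a::semigroup_mult itself \<Rightarrow> bool" where
  "inverse_semigroup _ \<longleftrightarrow> (\<forall>s::'a. \<exists>!t. s * t * s = s \<and> t * s * t = t)"

definition sinv :: "'a::semigroup_mult \<Rightarrow> 'a" where
  "sinv s = (THE t. s * t * s = s \<and> t * s * t = t)"

definition idems :: "'a::semigroup_mult set" where
  "idems = {e. e * e = e}"

definition metric_on :: "'x set \<Rightarrow> ('x \<Rightarrow> 'x \<Rightarrow> real) \<Rightarrow> bool" where
  "metric_on A m \<longleftrightarrow>
     (\<forall>x\<in>A. \<forall>y\<in>A. m x y = 0 \<longleftrightarrow> x = y) \<and>
     (\<forall>x\<in>A. \<forall>y\<in>A. m x y = m y x) \<and>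
     (\<forall>x\<in>A. \<forall>y\<in>A. \<forall>z\<in>A. m x z \<le> m x y + m y z)"

definition fiber :: "'x set \<Rightarrow> ('x \<Rightarrow> 'a) \<Rightarrow> 'a \<Rightarrow> 'x set" where
  "fiber X p e = {x\<in>X. p x = e}"

text \<open>Presheaf (X, E(S), p) over the semilattice of idempotents; the restriction
  map is the restriction of act to idempotents. dm e is the metric on the fiber X_e.\<close>
definition presheaf_metric ::
  "'x set \<Rightarrow> ('x \<Rightarrow> 'a::semigroup_mult) \<Rightarrow> ('x \<Rightarrow> 'a \<Rightarrow> 'x) \<Rightarrow> ('a \<Rightarrow> 'x \<Rightarrow> 'x \<Rightarrow> real) \<Rightarrow> bool" where
  "presheaf_metric X p act dm \<longleftrightarrow>
     (\<forall>x\<in>X. p x \<in> idems) \<and>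
     (\<forall>x\<in>X. \<forall>e\<in>idems. act x e \<in> X) \<and>
     (\<forall>x\<in>X. \<forall>e\<in>idems. \<forall>f\<in>idems. act (act x e) f = act x (e * f)) \<and>
     (\<forall>x\<in>X. act x (p x) = x) \<and>
     (\<forall>x\<in>X. \<forall>e\<in>idems. p (act x e) = p x * e) \<and>
     p ` X = idems \<and>
     (\<forall>e\<in>idems. metric_on (fiber X p e) (dm e)) \<and>
     (\<forall>e\<in>idems. \<forall>f\<in>idems. \<forall>x\<in>fiber X p e. \<forall>y\<in>fiber X p e.
        dm (e * f) (act x f) (act y f) \<le> dm e x y)"

definition acts_on ::
  "'x set \<Rightarrow> ('x \<Rightarrow> 'a::semigroup_mult) \<Rightarrow> ('x \<Rightarrow> 'a \<Rightarrow> 'x) \<Rightarrow> ('a \<Rightarrow> 'x \<Rightarrow> 'x \<Rightarrow> real) \<Rightarrow> bool" where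
  "acts_on X p act dm \<longleftrightarrow>
     presheaf_metric X p act dm \<and>
     (\<forall>x\<in>X. \<forall>s. act x s \<in> X) \<and>
     (\<forall>x\<in>X. \<forall>s t. act (act x s) t = act x (s * t)) \<and>
     (\<forall>x\<in>X. \<forall>s. p (act x s) = sinv s * p x * s) \<and>
     (\<forall>e\<in>idems. \<forall>s. \<forall>x\<in>fiber X p e. \<forall>y\<in>fiber X p e.
        dm (sinv s * e * s) (act x s) (act y s) \<le> dm e x y)"

definition ext_dist :: "('x \<Rightarrow> 'a) \<Rightarrow> ('a \<Rightarrow> 'x \<Rightarrow> 'x \<Rightarrow> real) \<Rightarrow> 'x \<Rightarrow> 'x \<Rightarrow> ereal" where
  "ext_dist p dm x y = (if p x = p y then ereal (dm (p x) x y) else \<infinity>)"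

definition restr_set :: "'x set \<Rightarrow> ('x \<Rightarrow> 'a \<Rightarrow> 'x) \<Rightarrow> 'a \<Rightarrow> 'x set" where
  "restr_set X act e = (\<lambda>x. act x e) ` X"

end

theory Submission
  imports Defs
begin

text \<open>Every action map \<open>x \<mapsto> x \<cdot> u\<close> is non-expanding for the extended metric. If \<open>u v u = u\<close>,
  then \<open>x \<mapsto> x \<cdot> u\<close> and \<open>y \<mapsto> y \<cdot> v\<close> are mutually inverse between \<open>X \<cdot> uv\<close> and \<open>X \<cdot> vu\<close>, so
  \<open>d(x, y) = d(x u v, y u v) \<le> d(x u, y u) \<le> d(x, y)\<close> on \<open>X \<cdot> uv\<close>. For \<open>u = s\<close>, \<open>v = s\<^sup>-\<^sup>1\<close>
  both regularity identities hold.\<close>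

lemma sinv_regular:
  assumes "inverse_semigroup TYPE('a::semigroup_mult)"
  shows "(s::'a) * sinv s * s = s" and "sinv s * s * sinv s = sinv s"
proof -
  have "\<exists>!t. s * t * s = s \<and> t * s * t = t"
    using assms unfolding inverse_semigroup_def by blast
  then have "s * sinv s * s = s \<and> sinv s * s * sinv s = sinv s"
    unfolding sinv_def by (rule theI')
  then show "s * sinv s * s = s" and "sinv s * s * sinv s = sinv s" by auto
qed

lemma acts_on_act_in:
  "acts_on X p act dm \<Longrightarrow> x \<in> X \<Longrightarrow> act x u \<in> X"
  unfolding acts_on_def by blast

lemma acts_on_act_act:
  "acts_on X p act dm \<Longrightarrow> x \<in> X \<Longrightarrow> act (act x u) v = act x (u * v)"
  unfolding acts_on_def by blast

lemma acts_on_p_act: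
  "acts_on X p act dm \<Longrightarrow> x \<in> X \<Longrightarrow> p (act x u) = sinv u * p x * u"
  unfolding acts_on_def by blast

lemma restr_set_subset: "acts_on X p act dm \<Longrightarrow> restr_set X act e \<subseteq> X"
  unfolding restr_set_def by (auto intro: acts_on_act_in)

lemma ext_dist_act_le:
  assumes act: "acts_on X p act dm" and "x \<in> X" "y \<in> X"
  shows "ext_dist p dm (act x u) (act y u) \<le> ext_dist p dm x y"
proof (cases "p x = p y")
  case True
  have "p x \<in> idems"
    using act \<open>x \<in> X\<close> unfolding acts_on_def presheaf_metric_def by blast
  moreover have "x \<in> fiber X p (p x)" "y \<in> fiber X p (p x)"
    using \<open>x \<in> X\<close> \<open>y \<in> X\<close> True unfolding fiber_def by auto
  ultimately have "dm (sinv u * p x * u) (act x u) (act y u) \<le> dm (p x) x y"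
    using act unfolding acts_on_def by blast
  moreover have "p (act x u) = sinv u * p x * u" "p (act y u) = sinv u * p x * u"
    using acts_on_p_act[OF act] \<open>x \<in> X\<close> \<open>y \<in> X\<close> True by auto
  ultimately show ?thesis
    using True unfolding ext_dist_def by simp
next
  case False
  then show ?thesis unfolding ext_dist_def by simp
qed

lemma act_act_restr_set:
  assumes act: "acts_on X p act dm" and uvu: "u * v * u = u"
    and x: "x \<in> restr_set X act (u * v)"
  shows "act (act x u) v = x"
proof -
  obtain x0 where "x0 \<in> X" and x0: "x = act x0 (u * v)"
    using x unfolding restr_set_def by auto
  then have "act (act x u) v = act x0 (u * v * u * v)"
    using x0 acts_on_act_act[OF act] acts_on_act_in[OF act] by (simp add: mult.assoc)
  then show ?thesis using x0 uvu by simp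
qed

lemma act_in_restr_set:
  assumes act: "acts_on X p act dm" and uvu: "u * v * u = u"
    and x: "x \<in> restr_set X act (u * v)"
  shows "act x u \<in> restr_set X act (v * u)"
proof -
  obtain x0 where "x0 \<in> X" and x0: "x = act x0 (u * v)"
    using x unfolding restr_set_def by auto
  have "act x u = act x0 (u * v * u)"
    using x0 \<open>x0 \<in> X\<close> acts_on_act_act[OF act] by simp
  also have "\<dots> = act (act x0 u) (v * u)"
    using \<open>x0 \<in> X\<close> acts_on_act_act[OF act] uvu by (simp add: mult.assoc)
  finally show ?thesis
    using \<open>x0 \<in> X\<close> acts_on_act_in[OF act] unfolding restr_set_def by blast
qed

lemma bij_betw_act_restr_set:
  assumes act: "acts_on X p act dm" and "u * v * u = u" and "v * u * v = v"
  shows "bij_betw (\<lambda>x. act x u) (restr_set X act (u * v)) (restr_set X act (v * u))"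
proof (rule bij_betw_byWitness[where f' = "\<lambda>y. act y v"])
  show "\<forall>x\<in>restr_set X act (u * v). act (act x u) v = x"
    using act_act_restr_set[OF act \<open>u * v * u = u\<close>] by blast
  show "\<forall>y\<in>restr_set X act (v * u). act (act y v) u = y"
    using act_act_restr_set[OF act \<open>v * u * v = v\<close>] by blast
  show "(\<lambda>x. act x u) ` restr_set X act (u * v) \<subseteq> restr_set X act (v * u)"
    using act_in_restr_set[OF act \<open>u * v * u = u\<close>] by blast
  show "(\<lambda>y. act y v) ` restr_set X act (v * u) \<subseteq> restr_set X act (u * v)"
    using act_in_restr_set[OF act \<open>v * u * v = v\<close>] by blast
qed

lemma ext_dist_act_restr_set:
  assumes act: "acts_on X p act dm" and uvu: "u * v * u = u"
    and x: "x \<in> restr_set X act (u * v)" and y: "y \<in> restr_set X act (u * v)"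
  shows "ext_dist p dm (act x u) (act y u) = ext_dist p dm x y"
proof (rule antisym)
  have "x \<in> X" "y \<in> X"
    using x y restr_set_subset[OF act] by auto
  then show "ext_dist p dm (act x u) (act y u) \<le> ext_dist p dm x y"
    using ext_dist_act_le[OF act] by blast
  have "ext_dist p dm x y = ext_dist p dm (act (act x u) v) (act (act y u) v)"
    using act_act_restr_set[OF act uvu] x y by simp
  also have "\<dots> \<le> ext_dist p dm (act x u) (act y u)"
    using ext_dist_act_le[OF act] acts_on_act_in[OF act] \<open>x \<in> X\<close> \<open>y \<in> X\<close> by blast
  finally show "ext_dist p dm x y \<le> ext_dist p dm (act x u) (act y u)" .
qed

theorem lemma1p12:
  fixes X :: "'x set" and p :: "'x \<Rightarrow> 'a::semigroup_mult"
    and act :: "'x \<Rightarrow> 'a \<Rightarrow> 'x" and dm :: "'a \<Rightarrow> 'x \<Rightarrow> 'x \<Rightarrow> real"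
  assumes "inverse_semigroup TYPE('a)"
    and "acts_on X p act dm"
  shows "bij_betw (\<lambda>x. act x s) (restr_set X act (s * sinv s)) (restr_set X act (sinv s * s))
    \<and> (\<forall>x\<in>restr_set X act (s * sinv s). \<forall>y\<in>restr_set X act (s * sinv s).
          ext_dist p dm (act x s) (act y s) = ext_dist p dm x y)"
  using bij_betw_act_restr_set[OF assms(2) sinv_regular[OF assms(1)]]
    ext_dist_act_restr_set[OF assms(2) sinv_regular(1)[OF assms(1)]]
  by blast

end
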